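(* Let $p$ be an odd prime and $q=2(p-1)$. Let $t\geq 0$ be an integer written as $t=q(c_np^n+\cdots+c_1p+c_0)+c_{-1}$ with $0\leq c_i<p$ for $0\leq i\leq n$ and $0\leq c_{-1}<q$. Let $s_1$ be an integer with $0<s_1<q$. If $c_{-1}>s_1$, then in the May spectral sequence $E_1^{s_1,t,*}=0$.
   Context: The May spectral sequence $\{E_r^{s,t,u},d_r\}$ (for the mod $p$ Steenrod algebra) has $E_1^{*,*,*}=E(h_{i,j}\mid i>0,j\geq 0)\otimes P(b_{i,j}\mid i>0,j\geq 0)\otimes P(a_k\mid k\geq 0)$ ($E$ exterior, $P$ polynomial), with $h_{i,j}\in E_1^{1,2(p^i-1)p^j,2i-1}$, $b_{i,j}\in E_1^{2,2(p^i-1)p^{j+1},p(2i-1)}$, $a_k\in E_1^{1,2p^k-1,2k+1}$. $E_1^{s,t,*}$ denotes the direct sum over all values of the third index. *)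

theory Defs
  imports Main "HOL-Computational_Algebra.Primes"
begin

text \<open>A monomial in E_1 = E(h_{i,j}) (x) P(b_{i,j}) (x) P(a_k) is encoded by its exponent
functions: h (i,j) in {0,1} (exterior), b (i,j) and a k arbitrary naturals; all finitely
supported, and h (0,j) = b (0,j) = 0 since the generators require i > 0.
These monomials form an F_p-basis of E_1.\<close>

type_synonym may_monomial = "((nat \<times> nat) \<Rightarrow> nat) \<times> ((nat \<times> nat) \<Rightarrow> nat) \<times> (nat \<Rightarrow> nat)"

definition supp :: "('a \<Rightarrow> nat) \<Rightarrow> 'a set" where
  "supp f = {x. f x \<noteq> 0}"

definition is_may_monomial :: "may_monomial \<Rightarrow> bool" where
  "is_may_monomial m = (case m of (h, b, a) \<Rightarrow>
      finite (supp h) \<and> finite (supp b) \<and> finite (supp a) \<and>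
      (\<forall>ij. h ij \<le> 1) \<and> (\<forall>j. h (0, j) = 0 \<and> b (0, j) = 0))"

definition mon_s :: "may_monomial \<Rightarrow> nat" where
  "mon_s m = (case m of (h, b, a) \<Rightarrow>
      (\<Sum>ij\<in>supp h. h ij) + (\<Sum>ij\<in>supp b. 2 * b ij) + (\<Sum>k\<in>supp a. a k))"

definition mon_t :: "nat \<Rightarrow> may_monomial \<Rightarrow> nat" where
  "mon_t p m = (case m of (h, b, a) \<Rightarrow>
      (\<Sum>(i,j)\<in>supp h. h (i,j) * (2 * (p ^ i - 1) * p ^ j))
    + (\<Sum>(i,j)\<in>supp b. b (i,j) * (2 * (p ^ i - 1) * p ^ (j + 1)))
    + (\<Sum>k\<in>supp a. a k * (2 * p ^ k - 1)))"

text \<open>The monomial basis of E_1^{s,t,*} (direct sum over the third (May) grading).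
E_1^{s,t,*} = 0 iff this basis is empty.\<close>
definition may_E1_basis :: "nat \<Rightarrow> nat \<Rightarrow> nat \<Rightarrow> may_monomial set" where
  "may_E1_basis p s t = {m. is_may_monomial m \<and> mon_s m = s \<and> mon_t p m = t}"

end

theory Submission
  imports Defs "HOL-Number_Theory.Cong"
begin

text \<open>Modulo q = 2(p - 1) the internal degree of h_{i,j} and b_{i,j} vanishes, while that of
every a_k is 1. Hence the internal degree of a monomial is congruent to its number of a-factors,
which is at most its homological degree s. For s < q this forces t mod q \<le> s, so no monomial
has t mod q = c_{-1} > s.\<close>

lemma diff_one_dvd_power_diff_one: "(x - 1) dvd (x ^ n - 1)" for x :: nat
proof (cases "x = 0")
  case True
  then show ?thesis by (cases n) simp_all
next
  case False
  then have "[x = 1] (mod x - 1)"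
    by (simp add: cong_def mod_if)
  then have "[x ^ n = 1] (mod x - 1)"
    using cong_pow by fastforce
  then show ?thesis
    by (rule cong_to_1_nat)
qed

lemma double_diff_one_dvd_power_diff_one_mult: "2 * (p - 1) dvd 2 * (p ^ i - 1) * x" for p :: nat
  by (intro dvd_mult2 mult_dvd_mono dvd_refl diff_one_dvd_power_diff_one)

lemma double_power_diff_one_cong_one:
  fixes p :: nat
  assumes "p \<ge> 1"
  shows "[2 * p ^ k - 1 = 1] (mod 2 * (p - 1))"
proof -
  have "p ^ k \<ge> 1"
    using assms by simp
  then have "2 * p ^ k - 1 = 2 * (p ^ k - 1) * 1 + 1"
    by simp
  moreover have "[2 * (p ^ k - 1) * 1 + 1 = 0 + 1] (mod 2 * (p - 1))"
    by (intro cong_add cong_refl) (unfold cong_0_iff, rule double_diff_one_dvd_power_diff_one_mult)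
  ultimately show ?thesis
    by simp
qed

lemma mon_t_cong_a_count:
  fixes p :: nat
  assumes "p \<ge> 1"
  shows "[mon_t p (h, b, a) = (\<Sum>k\<in>supp a. a k)] (mod 2 * (p - 1))"
proof -
  have h_part: "2 * (p - 1) dvd (\<Sum>(i, j)\<in>supp h. h (i, j) * (2 * (p ^ i - 1) * p ^ j))"
    by (intro dvd_sum) (unfold case_prod_beta, intro dvd_mult double_diff_one_dvd_power_diff_one_mult)
  have b_part: "2 * (p - 1) dvd (\<Sum>(i, j)\<in>supp b. b (i, j) * (2 * (p ^ i - 1) * p ^ (j + 1)))"
    by (intro dvd_sum) (unfold case_prod_beta, intro dvd_mult double_diff_one_dvd_power_diff_one_mult)
  have a_part: "[(\<Sum>k\<in>supp a. a k * (2 * p ^ k - 1)) = (\<Sum>k\<in>supp a. a k * 1)] (mod 2 * (p - 1))"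
    by (intro cong_sum cong_scalar_left double_power_diff_one_cong_one assms)
  have "[mon_t p (h, b, a) = 0 + 0 + (\<Sum>k\<in>supp a. a k * 1)] (mod 2 * (p - 1))"
    unfolding mon_t_def prod.case by (intro cong_add a_part) (simp_all only: cong_0_iff h_part b_part)
  then show ?thesis
    by simp
qed

lemma a_count_le_mon_s: "(\<Sum>k\<in>supp a. a k) \<le> mon_s (h, b, a)"
  by (simp add: mon_s_def)

lemma mon_t_mod_le_mon_s:
  fixes p :: nat
  assumes "p \<ge> 1" and "mon_s m < 2 * (p - 1)"
  shows "mon_t p m mod (2 * (p - 1)) \<le> mon_s m"
proof -
  obtain h b a where m: "m = (h, b, a)"
    by (cases m) auto
  have "mon_t p m mod (2 * (p - 1)) = (\<Sum>k\<in>supp a. a k) mod (2 * (p - 1))"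
    using mon_t_cong_a_count[OF assms(1)] by (simp add: m cong_def)
  also have "\<dots> = (\<Sum>k\<in>supp a. a k)"
    using a_count_le_mon_s[of a h b] assms(2) by (simp add: m)
  finally show ?thesis
    using a_count_le_mon_s[of a h b] by (simp add: m)
qed

theorem lemma2p2:
  fixes p q t s1 n cm1 :: nat and c :: "nat \<Rightarrow> nat"
  assumes "prime p" and "odd p" and "q = 2 * (p - 1)"
    and "\<forall>i\<le>n. c i < p" and "cm1 < q"
    and "t = q * (\<Sum>i\<le>n. c i * p ^ i) + cm1"
    and "0 < s1" and "s1 < q"
    and "cm1 > s1"
  shows "may_E1_basis p s1 t = {}"
proof (rule ccontr)
  assume "may_E1_basis p s1 t \<noteq> {}"
  then obtain m where "mon_s m = s1" and "mon_t p m = t"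
    unfolding may_E1_basis_def by auto
  moreover have "p \<ge> 1"
    using prime_gt_0_nat[OF assms(1)] by simp
  ultimately have "t mod q \<le> s1"
    using mon_t_mod_le_mon_s assms(3,8) by blast
  moreover have "t mod q = cm1"
    using assms(5,6) by simp
  ultimately show False
    using assms(9) by simp
qed

end
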